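(* Let $(\pi_\rho,V_\rho)$ be an irreducible unitary representation of $Spin(n)$ and $V_\rho\otimes\mathbf{R}^n=\bigoplus_{k=0}^N V_{\lambda_k}$ its orthogonal decomposition into irreducible submodules. Then for every $k$, every $u\in\mathbf{R}^n$ and every orthonormal basis $\{e_i\}_{i=1}^n$ of $\mathbf{R}^n$, $$-\frac14\sum_{i=1}^n p^\rho_{\lambda_k}(e_i)\,\pi_\rho([e_i,u])=m(\lambda_k)\,p^\rho_{\lambda_k}(u),$$ where $[e_i,u]=e_iu-ue_i\in\mathfrak{spin}(n)$ is computed in $Cl_n$.
   Context: $Cl_n$ is the real Clifford algebra of $\mathbf{R}^n$ with $xy+yx=-2\langle x,y\rangle$; $\mathfrak{spin}(n)=\mathrm{span}\{[e_k,e_l]\}\subset Cl_n$, $Spin(n)=\exp\mathfrak{spin}(n)$, $\pi_{\mathrm{Ad}}(g)x=gxg^{-1}$ on $\mathbf{R}^n$, infinitesimally $\pi_{\mathrm{Ad}}(a)x=[a,x]$. $\pi_\rho$ also denotes the infinitesimal representation. $V_\rho\otimes\mathbf{R}^n$ carries $\pi_\rho\otimes\pi_{\mathrm{Ad}}$ and the tensor inner product; its irreducible constituents have multiplicity one and are mutually orthogonal; $\Pi^\rho_{\lambda_k}$ is the orthogonal projection onto $V_{\lambda_k}$, and the Clifford homomorphism is $p^\rho_{\lambda_k}(u)\phi:=\Pi^\rho_{\lambda_k}(\phi\otimes u)$. The conformal weight $m(\lambda_k)$ is the scalar by which the operator $\widehat C=\frac1{32}\sum_{i,j}\pi_\rho([e_i,e_j])\otimes\pi_{\mathrm{Ad}}([e_i,e_j])$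 acts on $V_{\lambda_k}$; explicitly $m(\lambda_k)=\frac12\big(n-\|\delta+\lambda_k\|^2+\|\delta+\rho\|^2-1\big)$, where $\delta$ is half the sum of positive roots and the norm is the standard Euclidean one on weights. *)

theory Defs
  imports "HOL-Analysis.Analysis"
begin

text \<open>R^n is modelled as real^'n for a finite linearly ordered index type 'n
(n = CARD('n)); the standard basis vector e_i is axis i 1.
Cl_n is modelled by coordinates with respect to the monomial basis
e_I = e_i1 ... e_ik (i1 < ... < ik), I ranging over subsets of 'n.
The product is e_I e_J = (-1)^(#{(i,j) in I x J. j < i} + #(I inter J)) e_(I symdiff J),
which encodes the relations x y + y x = -2 <x,y>.\<close>

type_synonym 'n cl = "'n set \<Rightarrow> real"

definition symdiff :: "'a set \<Rightarrow> 'a set \<Rightarrow> 'a set" where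
  "symdiff I J = (I - J) \<union> (J - I)"

definition cl_sign :: "('n::{finite,linorder}) set \<Rightarrow> ('n::{finite,linorder}) set \<Rightarrow> real" where
  "cl_sign I J = (-1) ^ (card {(i, j). i \<in> I \<and> j \<in> J \<and> j < i} + card (I \<inter> J))"

definition cl_mult :: "('n::{finite,linorder}) cl \<Rightarrow> ('n::{finite,linorder}) cl \<Rightarrow> ('n::{finite,linorder}) cl" where
  "cl_mult x y = (\<lambda>K. \<Sum>I\<in>UNIV. x I * y (symdiff I K) * cl_sign I (symdiff I K))"

definition cl_add :: "('n::{finite}) cl \<Rightarrow> ('n::{finite}) cl \<Rightarrow> ('n::{finite}) cl" where
  "cl_add x y = (\<lambda>I. x I + y I)"

definition cl_scale :: "real \<Rightarrow> ('n::{finite}) cl \<Rightarrow> ('n::{finite}) cl" where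
  "cl_scale c x = (\<lambda>I. c * x I)"

definition cl_comm :: "('n::{finite,linorder}) cl \<Rightarrow> ('n::{finite,linorder}) cl \<Rightarrow> ('n::{finite,linorder}) cl" where
  "cl_comm x y = (\<lambda>K. cl_mult x y K - cl_mult y x K)"

definition cl_vec :: "real ^ ('n::{finite,linorder}) \<Rightarrow> ('n::{finite,linorder}) cl" where
  "cl_vec u = (\<lambda>I. \<Sum>i\<in>UNIV. if I = {i} then u $ i else 0)"

definition cl_to_vec :: "('n::{finite,linorder}) cl \<Rightarrow> real ^ ('n::{finite,linorder})" where
  "cl_to_vec c = (\<chi> i. c {i})"

definition spin_alg :: "('n::{finite,linorder}) cl set" where
  "spin_alg = {(\<lambda>I. \<Sum>k\<in>UNIV. \<Sum>l\<in>UNIV.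
                   c k l * cl_comm (cl_vec (axis k 1)) (cl_vec (axis l 1)) I) | c. True}"

definition pi_Ad :: "('n::{finite,linorder}) cl \<Rightarrow> real ^ ('n::{finite,linorder}) \<Rightarrow> real ^ ('n::{finite,linorder})" where
  "pi_Ad a x = cl_to_vec (cl_comm a (cl_vec x))"

text \<open>V (x) R^n is modelled as 'v ^ 'n: the element X corresponds to
sum_j X$j (x) e_j.  With this identification the inner product of 'v ^ 'n is
exactly the tensor inner product.\<close>

definition tens :: "'v::real_vector \<Rightarrow> real ^ ('n::{finite}) \<Rightarrow> 'v ^ ('n::{finite})" where
  "tens \<phi> u = (\<chi> i. (u $ i) *\<^sub>R \<phi>)"

text \<open>A (x) B acting on V (x) R^n.\<close>
definition tensor_op :: "('v \<Rightarrow> 'v) \<Rightarrow> (real ^ ('n::{finite}) \<Rightarrow> real ^ ('n::{finite})) \<Rightarrow> 'v ^ ('n::{finite}) \<Rightarrow> ('v::real_vector) ^ ('n::{finite})" where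
  "tensor_op A B X = (\<chi> i. \<Sum>l\<in>UNIV. (B (axis l 1) $ i) *\<^sub>R A (X $ l))"

definition tens_act :: "(('n::{finite,linorder}) cl \<Rightarrow> 'v \<Rightarrow> 'v) \<Rightarrow> ('n::{finite,linorder}) cl \<Rightarrow> 'v ^ ('n::{finite,linorder}) \<Rightarrow> ('v::real_vector) ^ ('n::{finite,linorder})" where
  "tens_act \<pi> a X = tensor_op (\<pi> a) id X + tensor_op id (pi_Ad a) X"

definition C_hat :: "(('n::{finite,linorder}) cl \<Rightarrow> 'v \<Rightarrow> 'v) \<Rightarrow> 'v ^ ('n::{finite,linorder}) \<Rightarrow> ('v::real_vector) ^ ('n::{finite,linorder})" where
  "C_hat \<pi> X = (1/32) *\<^sub>R (\<Sum>i\<in>UNIV. \<Sum>j\<in>UNIV.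
      tensor_op (\<pi> (cl_comm (cl_vec (axis i 1)) (cl_vec (axis j 1))))
                (pi_Ad (cl_comm (cl_vec (axis i 1)) (cl_vec (axis j 1)))) X)"

definition orth_proj :: "'a::real_inner set \<Rightarrow> 'a \<Rightarrow> 'a" where
  "orth_proj W x = (THE y. y \<in> W \<and> (\<forall>w\<in>W. inner (x - y) w = 0))"

definition clifford_hom :: "('v::real_inner ^ ('n::{finite})) set \<Rightarrow> real ^ ('n::{finite}) \<Rightarrow> 'v \<Rightarrow> 'v ^ ('n::{finite})" where
  "clifford_hom W u \<phi> = orth_proj W (tens \<phi> u)"

text \<open>A (complex) irreducible unitary representation of spin(n), modelled on its
underlying real inner product space (real part of the Hermitian product) together
with its complex structure J, which commutes with the action and is orthogonal.\<close>
definition unitary_spin_rep :: "(('n::{finite,linorder}) cl \<Rightarrow> 'v \<Rightarrow> 'v) \<Rightarrow> ('v \<Rightarrow> 'v) \<Rightarrow> ('v::real_inner) set \<Rightarrow> bool" where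
  "unitary_spin_rep \<pi> J V \<longleftrightarrow>
     subspace V \<and> linear J \<and> (\<forall>x\<in>V. J x \<in> V) \<and> (\<forall>x. J (J x) = - x) \<and>
     (\<forall>x y. inner (J x) (J y) = inner x y) \<and>
     (\<forall>a\<in>spin_alg. linear (\<pi> a) \<and> (\<forall>x\<in>V. \<pi> a x \<in> V)) \<and>
     (\<forall>a\<in>spin_alg. \<forall>b\<in>spin_alg. \<pi> (cl_add a b) = (\<lambda>x. \<pi> a x + \<pi> b x)) \<and>
     (\<forall>a\<in>spin_alg. \<forall>c. \<pi> (cl_scale c a) = (\<lambda>x. c *\<^sub>R \<pi> a x)) \<and>
     (\<forall>a\<in>spin_alg. \<forall>b\<in>spin_alg. \<pi> (cl_comm a b) = (\<lambda>x. \<pi> a (\<pi> b x) - \<pi> b (\<pi> a x))) \<and>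
     (\<forall>a\<in>spin_alg. \<forall>x y. inner (\<pi> a x) y = - inner x (\<pi> a y)) \<and>
     (\<forall>a\<in>spin_alg. \<forall>x. \<pi> a (J x) = J (\<pi> a x))"

definition irreducible_rep :: "(('n::{finite,linorder}) cl \<Rightarrow> 'v \<Rightarrow> 'v) \<Rightarrow> ('v \<Rightarrow> 'v) \<Rightarrow> ('v::real_inner) set \<Rightarrow> bool" where
  "irreducible_rep \<pi> J V \<longleftrightarrow> V \<noteq> {0} \<and>
     (\<forall>U. subspace U \<and> U \<subseteq> V \<and> (\<forall>x\<in>U. J x \<in> U) \<and>
          (\<forall>a\<in>spin_alg. \<forall>x\<in>U. \<pi> a x \<in> U) \<longrightarrow> U = {0} \<or> U = V)"

definition tens_J :: "('v \<Rightarrow> 'v) \<Rightarrow> 'v ^ ('n::{finite}) \<Rightarrow> ('v::real_vector) ^ ('n::{finite})" where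
  "tens_J J X = (\<chi> i. J (X $ i))"

end

theory Submission
  imports Defs
begin

text \<open>
  Since f(x) = pi([x,u]) phi is linear, sum_i f(b_i) (x) b_i is the image of the tensor
  sum_i b_i (x) b_i, which is the same for every orthonormal basis; so one may take the standard
  basis. From pi_Ad([e_i,e_j]) u = 4 (u_i e_j - u_j e_i) and the antisymmetry of [e_i,e_j], the
  definition of C_hat then gives C_hat (phi (x) u) = -1/4 sum_j pi([e_j,u]) phi (x) e_j.
  Finally, C_hat acts by the scalar m(lambda_l) on each summand of the orthogonal decomposition,
  hence commutes with the orthogonal projection onto V_lambda_k, and projecting the previous
  identity gives the claim.
\<close>

section \<open>Monomials of the Clifford algebra\<close>

lemma symdiff_commute: "symdiff I J = symdiff J I"
  unfolding symdiff_def by blast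

lemma symdiff_symdiff_cancel: "symdiff I (symdiff I K) = K"
  unfolding symdiff_def by blast

definition cl_monom :: "'n set \<Rightarrow> real \<Rightarrow> 'n cl" where
  "cl_monom I a = (\<lambda>K. if K = I then a else 0)"

lemma cl_mult_monom:
  fixes I J :: "'n::{finite,linorder} set"
  shows "cl_mult (cl_monom I a) (cl_monom J b) = cl_monom (symdiff I J) (a * b * cl_sign I J)"
proof
  fix K :: "'n::{finite,linorder} set"
  have "cl_mult (cl_monom I a) (cl_monom J b) K
      = (\<Sum>I'\<in>UNIV. if I' = I then a * (cl_monom J b (symdiff I K) * cl_sign I (symdiff I K)) else 0)"
    unfolding cl_mult_def cl_monom_def by (intro sum.cong) auto
  also have "\<dots> = cl_monom (symdiff I J) (a * b * cl_sign I J) K"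
    by (auto simp: cl_monom_def symdiff_symdiff_cancel)
  finally show "cl_mult (cl_monom I a) (cl_monom J b) K = cl_monom (symdiff I J) (a * b * cl_sign I J) K" .
qed

lemma cl_comm_monom:
  fixes I J :: "'n::{finite,linorder} set"
  shows "cl_comm (cl_monom I a) (cl_monom J b) = cl_monom (symdiff I J) (a * b * (cl_sign I J - cl_sign J I))"
  unfolding cl_comm_def cl_mult_monom by (auto simp: cl_monom_def symdiff_commute algebra_simps)

lemma cl_vec_axis: "cl_vec (axis k 1) = cl_monom {k} 1"
proof
  fix I
  have "cl_vec (axis k 1) I = (\<Sum>i\<in>UNIV. if i = k then cl_monom {k} 1 I else 0)"
    unfolding cl_vec_def cl_monom_def by (intro sum.cong) (auto simp: axis_def)
  then show "cl_vec (axis k 1) I = cl_monom {k} 1 I" by simp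
qed

lemma cl_vec_eq_sum: "cl_vec x = (\<lambda>I. \<Sum>k\<in>UNIV. x $ k * cl_monom {k} 1 I)"
  unfolding cl_vec_def cl_monom_def by (intro ext sum.cong) auto

lemma cl_mult_sum_sum:
  "cl_mult (\<lambda>I. \<Sum>k\<in>UNIV. a k * f k I) (\<lambda>J. \<Sum>l\<in>UNIV. b l * g l J) K
   = (\<Sum>k\<in>UNIV. \<Sum>l\<in>UNIV. a k * b l * cl_mult (f k) (g l) K)"
proof -
  let ?T = "\<lambda>I k l. a k * (b l * (f k I * (cl_sign I (symdiff I K) * g l (symdiff I K))))"
  have "cl_mult (\<lambda>I. \<Sum>k\<in>UNIV. a k * f k I) (\<lambda>J. \<Sum>l\<in>UNIV. b l * g l J) K
     = (\<Sum>I\<in>UNIV. \<Sum>l\<in>UNIV. \<Sum>k\<in>UNIV. ?T I k l)"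
    unfolding cl_mult_def by (simp add: sum_distrib_left sum_distrib_right mult_ac)
  also have "\<dots> = (\<Sum>l\<in>UNIV. \<Sum>k\<in>UNIV. \<Sum>I\<in>UNIV. ?T I k l)"
    by (subst sum.swap) (rule sum.cong[OF refl], rule sum.swap)
  also have "\<dots> = (\<Sum>k\<in>UNIV. \<Sum>l\<in>UNIV. \<Sum>I\<in>UNIV. ?T I k l)"
    by (rule sum.swap)
  also have "\<dots> = (\<Sum>k\<in>UNIV. \<Sum>l\<in>UNIV. a k * b l * cl_mult (f k) (g l) K)"
    unfolding cl_mult_def by (simp add: sum_distrib_left mult_ac)
  finally show ?thesis .
qed

section \<open>The generators [e_k, e_l] of spin(n)\<close>

lemma cl_sign_singletons_diff:
  fixes i j :: "'n::{finite,linorder}"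
  assumes "i \<noteq> j"
  shows "cl_sign {i} {j} - cl_sign {j} {i} = (if i < j then 2 else -2)"
proof -
  have "{(a, b). a \<in> {i} \<and> b \<in> {j} \<and> b < a} = (if j < i then {(i, j)} else {})"
       "{(a, b). a \<in> {j} \<and> b \<in> {i} \<and> b < a} = (if i < j then {(j, i)} else {})"
    by auto
  then show ?thesis
    using assms unfolding cl_sign_def by auto
qed

lemma cl_sign_pair_singleton_diff:
  fixes i j :: "'n::{finite,linorder}"
  assumes "i \<noteq> j"
  shows "cl_sign {i, j} {i} - cl_sign {i} {i, j} = (if i < j then 2 else -2)"
proof -
  have "{(a, b). a \<in> {i, j} \<and> b \<in> {i} \<and> b < a} = (if i < j then {(j, i)} else {})"
       "{(a, b). a \<in> {i} \<and> b \<in> {i, j} \<and> b < a} = (if j < i then {(i, j)} else {})"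
    using assms by auto
  moreover have "{i, j} \<inter> {i} = {i}" "{i} \<inter> {i, j} = {i}"
    by auto
  ultimately show ?thesis
    using assms unfolding cl_sign_def by auto
qed

definition spin_gen :: "'n \<Rightarrow> 'n \<Rightarrow> ('n::{finite,linorder}) cl" where
  "spin_gen k l = cl_comm (cl_vec (axis k 1)) (cl_vec (axis l 1))"

lemma spin_gen_diag: "spin_gen i i = (\<lambda>K. 0)"
  unfolding spin_gen_def cl_comm_def by simp

lemma spin_gen_neq:
  assumes "i \<noteq> j"
  shows "spin_gen i j = cl_monom {i, j} (if i < j then 2 else -2)"
proof -
  have "symdiff {i} {j} = {i, j}"
    using assms unfolding symdiff_def by auto
  then show ?thesis
    unfolding spin_gen_def cl_vec_axis cl_comm_monom using cl_sign_singletons_diff[OF assms] by simp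
qed

lemma spin_gen_antisym: "spin_gen l k = cl_scale (-1) (spin_gen k l)"
  unfolding spin_gen_def cl_comm_def cl_scale_def by auto

lemma cl_comm_cl_vec:
  "cl_comm (cl_vec x) (cl_vec u) = (\<lambda>K. \<Sum>k\<in>UNIV. \<Sum>l\<in>UNIV. (x $ k * u $ l) * spin_gen k l K)"
proof
  fix K
  have "cl_comm (cl_vec x) (cl_vec u) K
      = (\<Sum>k\<in>UNIV. \<Sum>l\<in>UNIV. x $ k * u $ l * cl_mult (cl_monom {k} 1) (cl_monom {l} 1) K)
      - (\<Sum>l\<in>UNIV. \<Sum>k\<in>UNIV. u $ l * x $ k * cl_mult (cl_monom {l} 1) (cl_monom {k} 1) K)"
    unfolding cl_comm_def cl_vec_eq_sum cl_mult_sum_sum ..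
  also have "\<dots> = (\<Sum>k\<in>UNIV. \<Sum>l\<in>UNIV. (x $ k * u $ l) * spin_gen k l K)"
    unfolding spin_gen_def cl_vec_axis cl_comm_def
    by (subst (2) sum.swap) (simp add: sum_subtractf[symmetric] algebra_simps)
  finally show "cl_comm (cl_vec x) (cl_vec u) K = (\<Sum>k\<in>UNIV. \<Sum>l\<in>UNIV. (x $ k * u $ l) * spin_gen k l K)" .
qed

lemma cl_to_vec_monom_singleton: "cl_to_vec (cl_monom {j} c) = c *\<^sub>R axis j 1"
  by (simp add: vec_eq_iff cl_to_vec_def cl_monom_def axis_def)

lemma cl_to_vec_monom_nonsingleton: "(\<And>p. S \<noteq> {p}) \<Longrightarrow> cl_to_vec (cl_monom S c) = 0"
  by (auto simp: vec_eq_iff cl_to_vec_def cl_monom_def)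

lemma linear_pi_Ad: "linear (pi_Ad a)"
  by (rule linearI)
    (simp_all add: pi_Ad_def cl_to_vec_def cl_comm_def cl_mult_def cl_vec_eq_sum vec_eq_iff
      algebra_simps sum.distrib sum_distrib_left sum_distrib_right)

lemma vec_basis_expansion: "(\<Sum>l\<in>UNIV. x $ l *\<^sub>R axis l 1) = x"
  using basis_expansion[of x] by (simp add: scalar_mult_eq_scaleR)

lemma pi_Ad_spin_gen_axis:
  "pi_Ad (spin_gen i j) (axis l 1) = 4 *\<^sub>R ((if l = i then axis j 1 else 0) - (if l = j then axis i 1 else 0))"
proof (cases "i = j")
  case True
  then show ?thesis
    by (simp add: pi_Ad_def cl_to_vec_def spin_gen_diag cl_comm_def cl_mult_def vec_eq_iff)
next
  case False
  let ?c = "\<lambda>l. (if i < j then 2 else -2) * (cl_sign {i, j} {l} - cl_sign {l} {i, j})"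
  have pi_Ad_eq: "pi_Ad (spin_gen i j) (axis l 1) = cl_to_vec (cl_monom (symdiff {i, j} {l}) (?c l))"
    unfolding pi_Ad_def spin_gen_neq[OF False] cl_vec_axis cl_comm_monom by simp
  consider "l = i" | "l = j" | "l \<notin> {i, j}"
    by blast
  then show ?thesis
  proof cases
    case 1
    have "symdiff {i, j} {l} = {j}"
      using 1 False unfolding symdiff_def by auto
    moreover have "?c l = 4"
      using 1 cl_sign_pair_singleton_diff[OF False] by simp
    ultimately show ?thesis
      unfolding pi_Ad_eq using 1 False by (simp add: cl_to_vec_monom_singleton)
  next
    case 2
    have "symdiff {i, j} {l} = {i}"
      using 2 False unfolding symdiff_def by auto
    moreover have "cl_sign {i, j} {l} - cl_sign {l} {i, j} = (if j < i then 2 else -2)"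
      using 2 cl_sign_pair_singleton_diff[of j i] False by (simp add: insert_commute)
    then have "?c l = -4"
      using False by (cases i j rule: linorder_cases) auto
    ultimately show ?thesis
      unfolding pi_Ad_eq using 2 False by (simp add: cl_to_vec_monom_singleton)
  next
    case 3
    then have "i \<in> symdiff {i, j} {l}" "l \<in> symdiff {i, j} {l}" "i \<noteq> l"
      unfolding symdiff_def by auto
    then have "symdiff {i, j} {l} \<noteq> {p}" for p
      by (metis singletonD)
    then show ?thesis
      unfolding pi_Ad_eq using 3 by (simp add: cl_to_vec_monom_nonsingleton)
  qed
qed

lemma pi_Ad_spin_gen: "pi_Ad (spin_gen i j) u = 4 *\<^sub>R (u $ i *\<^sub>R axis j 1 - u $ j *\<^sub>R axis i 1)"
proof -
  have "pi_Ad (spin_gen i j) u = (\<Sum>l\<in>UNIV. u $ l *\<^sub>R pi_Ad (spin_gen i j) (axis l 1))"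
    by (subst (1) vec_basis_expansion[symmetric]) (simp add: linear_sum[OF linear_pi_Ad] linear_scale[OF linear_pi_Ad])
  then show ?thesis
    by (simp add: pi_Ad_spin_gen_axis scaleR_diff_right sum_subtractf mult.commute
        if_distrib[of "\<lambda>v. _ *\<^sub>R v"] cong: if_cong)
qed

lemma spin_alg_eq: "spin_alg = {(\<lambda>I. \<Sum>k\<in>UNIV. \<Sum>l\<in>UNIV. c k l * spin_gen k l I) | c. True}"
  unfolding spin_alg_def spin_gen_def ..

lemma in_spin_algI: "a = (\<lambda>I. \<Sum>k\<in>UNIV. \<Sum>l\<in>UNIV. c k l * spin_gen k l I) \<Longrightarrow> a \<in> spin_alg"
  unfolding spin_alg_eq by blast

lemma spin_gen_in_spin_alg: "spin_gen i j \<in> spin_alg"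
proof -
  let ?c = "\<lambda>k l. if k = i then if l = j then 1 else 0 else 0"
  have "(\<Sum>l\<in>UNIV. ?c k l * spin_gen k l I) = (if k = i then spin_gen k j I else 0)" for k I
    by (cases "k = i") (simp_all add: if_distrib[where f="\<lambda>c. c * _"] cong: if_cong)
  then have "spin_gen i j = (\<lambda>I. \<Sum>k\<in>UNIV. \<Sum>l\<in>UNIV. ?c k l * spin_gen k l I)"
    by simp
  then show ?thesis
    by (rule in_spin_algI)
qed

lemma zero_in_spin_alg: "(\<lambda>I. 0) \<in> spin_alg"
  by (rule in_spin_algI[where c="\<lambda>k l. 0"]) simp

lemma cl_add_in_spin_alg:
  assumes "a \<in> spin_alg" "b \<in> spin_alg"
  shows "cl_add a b \<in> spin_alg"
proof -
  obtain c d where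
    "a = (\<lambda>I. \<Sum>k\<in>UNIV. \<Sum>l\<in>UNIV. c k l * spin_gen k l I)"
    "b = (\<lambda>I. \<Sum>k\<in>UNIV. \<Sum>l\<in>UNIV. d k l * spin_gen k l I)"
    using assms unfolding spin_alg_eq by blast
  then have "cl_add a b = (\<lambda>I. \<Sum>k\<in>UNIV. \<Sum>l\<in>UNIV. (c k l + d k l) * spin_gen k l I)"
    by (simp add: cl_add_def sum.distrib[symmetric] ring_distribs)
  then show ?thesis
    by (rule in_spin_algI)
qed

lemma cl_scale_in_spin_alg:
  assumes "a \<in> spin_alg"
  shows "cl_scale r a \<in> spin_alg"
proof -
  obtain c where "a = (\<lambda>I. \<Sum>k\<in>UNIV. \<Sum>l\<in>UNIV. c k l * spin_gen k l I)"
    using assms unfolding spin_alg_eq by blast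
  then have "cl_scale r a = (\<lambda>I. \<Sum>k\<in>UNIV. \<Sum>l\<in>UNIV. (r * c k l) * spin_gen k l I)"
    by (simp add: cl_scale_def sum_distrib_left mult.assoc)
  then show ?thesis
    by (rule in_spin_algI)
qed

section \<open>Tensors and the operator C_hat\<close>

lemma linear_tensor_op:
  fixes A :: "'v::real_vector \<Rightarrow> 'v" and B :: "real ^ 'n::finite \<Rightarrow> real ^ 'n"
  assumes "linear A"
  shows "linear (tensor_op A B)"
proof (rule linearI)
  fix X Y :: "'v ^ 'n" and c :: real
  show "tensor_op A B (X + Y) = tensor_op A B X + tensor_op A B Y"
    unfolding tensor_op_def by (simp add: vec_eq_iff linear_add[OF assms] scaleR_add_right sum.distrib)
  show "tensor_op A B (c *\<^sub>R X) = c *\<^sub>R tensor_op A B X"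
    unfolding tensor_op_def by (simp add: vec_eq_iff linear_scale[OF assms] scaleR_sum_right mult.commute)
qed

lemma linear_tens_left: "linear (\<lambda>\<phi>. tens \<phi> u)"
  by (rule linearI) (simp_all add: tens_def vec_eq_iff algebra_simps)

lemma linear_tens_right: "linear (tens \<phi>)"
  by (rule linearI) (simp_all add: tens_def vec_eq_iff algebra_simps)

lemma tensor_op_tens:
  assumes "linear A" "linear B"
  shows "tensor_op A B (tens \<phi> u) = tens (A \<phi>) (B u)"
proof -
  have "B u = (\<Sum>l\<in>UNIV. u $ l *\<^sub>R B (axis l 1))"
    by (subst (1) vec_basis_expansion[symmetric]) (simp add: linear_sum[OF assms(2)] linear_scale[OF assms(2)])
  then show ?thesis
    by (simp add: tensor_op_def tens_def vec_eq_iff linear_scale[OF assms(1)] sum_component scaleR_sum_left mult.commute)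
qed

context
  fixes \<pi> :: "('n::{finite,linorder}) cl \<Rightarrow> 'v \<Rightarrow> 'v::real_inner" and J V
  assumes rep: "unitary_spin_rep \<pi> J V"
begin

lemma unitary_spin_rep_linear: "a \<in> spin_alg \<Longrightarrow> linear (\<pi> a)"
  using rep unfolding unitary_spin_rep_def by blast

lemma unitary_spin_rep_add:
  "a \<in> spin_alg \<Longrightarrow> b \<in> spin_alg \<Longrightarrow> \<pi> (cl_add a b) = (\<lambda>x. \<pi> a x + \<pi> b x)"
  using rep unfolding unitary_spin_rep_def by blast

lemma unitary_spin_rep_scale: "a \<in> spin_alg \<Longrightarrow> \<pi> (cl_scale c a) = (\<lambda>x. c *\<^sub>R \<pi> a x)"
  using rep unfolding unitary_spin_rep_def by blast

lemma unitary_spin_rep_lincomb: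
  assumes "finite S" "\<And>p. p \<in> S \<Longrightarrow> f p \<in> spin_alg"
  shows "(\<lambda>I. \<Sum>p\<in>S. c p * f p I) \<in> spin_alg \<and>
         \<pi> (\<lambda>I. \<Sum>p\<in>S. c p * f p I) = (\<lambda>v. \<Sum>p\<in>S. c p *\<^sub>R \<pi> (f p) v)"
  using assms
proof (induction S rule: finite_induct)
  case empty
  have "\<pi> (\<lambda>I. 0) = \<pi> (cl_scale 0 (\<lambda>I. 0))"
    by (simp add: cl_scale_def)
  also have "\<dots> = (\<lambda>v. 0)"
    using unitary_spin_rep_scale[OF zero_in_spin_alg] by simp
  finally have "\<pi> (\<lambda>I. 0) = (\<lambda>v. 0)" .
  then show ?case
    using zero_in_spin_alg by simp
next
  case (insert x F)
  let ?a = "cl_scale (c x) (f x)" and ?b = "\<lambda>I. \<Sum>p\<in>F. c p * f p I"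
  have a: "?a \<in> spin_alg" and b: "?b \<in> spin_alg"
    using insert cl_scale_in_spin_alg by auto
  have "(\<lambda>I. \<Sum>p\<in>insert x F. c p * f p I) = cl_add ?a ?b"
    using insert(1,2) by (simp add: cl_add_def cl_scale_def)
  moreover have "\<pi> (cl_add ?a ?b) = (\<lambda>v. \<pi> ?a v + \<pi> ?b v)" "\<pi> ?a = (\<lambda>v. c x *\<^sub>R \<pi> (f x) v)"
    using unitary_spin_rep_add[OF a b] unitary_spin_rep_scale insert(4) by auto
  ultimately show ?case
    using cl_add_in_spin_alg[OF a b] insert by simp
qed

lemma unitary_spin_rep_antisym: "\<pi> (spin_gen l k) v = - \<pi> (spin_gen k l) v"
  unfolding spin_gen_antisym[of l k] unitary_spin_rep_scale[OF spin_gen_in_spin_alg] by simp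

lemma unitary_spin_rep_cl_comm_cl_vec:
  "\<pi> (cl_comm (cl_vec x) (cl_vec u)) \<phi> = (\<Sum>k\<in>UNIV. \<Sum>l\<in>UNIV. (x $ k * u $ l) *\<^sub>R \<pi> (spin_gen k l) \<phi>)"
proof -
  let ?c = "\<lambda>p. x $ fst p * u $ snd p" and ?g = "\<lambda>p. spin_gen (fst p) (snd p)"
  have "cl_comm (cl_vec x) (cl_vec u) = (\<lambda>K. \<Sum>p\<in>UNIV. ?c p * ?g p K)"
    unfolding cl_comm_cl_vec
    by (simp add: sum.cartesian_product UNIV_Times_UNIV[symmetric] case_prod_beta del: UNIV_Times_UNIV)
  then have "\<pi> (cl_comm (cl_vec x) (cl_vec u)) \<phi> = (\<Sum>p\<in>UNIV. ?c p *\<^sub>R \<pi> (?g p) \<phi>)"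
    using unitary_spin_rep_lincomb[of UNIV ?g ?c] by (simp add: spin_gen_in_spin_alg)
  then show ?thesis
    by (simp add: sum.cartesian_product UNIV_Times_UNIV[symmetric] case_prod_beta del: UNIV_Times_UNIV)
qed

lemma linear_unitary_spin_rep_cl_comm: "linear (\<lambda>x. \<pi> (cl_comm (cl_vec x) (cl_vec u)) \<phi>)"
  unfolding unitary_spin_rep_cl_comm_cl_vec
  by (rule linearI) (simp_all add: algebra_simps scaleR_add_left sum.distrib scaleR_sum_right)

lemma unitary_spin_rep_cl_comm_axis:
  "\<pi> (cl_comm (cl_vec (axis p 1)) (cl_vec u)) \<phi> = - (\<Sum>l\<in>UNIV. u $ l *\<^sub>R \<pi> (spin_gen l p) \<phi>)"
proof -
  have "(\<Sum>k\<in>UNIV. \<Sum>l\<in>UNIV. (axis p 1 $ k * u $ l) *\<^sub>R \<pi> (spin_gen k l) \<phi>)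
      = (\<Sum>k\<in>UNIV. if k = p then \<Sum>l\<in>UNIV. u $ l *\<^sub>R \<pi> (spin_gen k l) \<phi> else 0)"
    by (intro sum.cong) (auto simp: axis_def)
  then have "\<pi> (cl_comm (cl_vec (axis p 1)) (cl_vec u)) \<phi> = (\<Sum>l\<in>UNIV. u $ l *\<^sub>R \<pi> (spin_gen p l) \<phi>)"
    unfolding unitary_spin_rep_cl_comm_cl_vec by simp
  then show ?thesis
    unfolding unitary_spin_rep_antisym[of p] by (simp add: sum_negf)
qed

lemma linear_C_hat: "linear (C_hat \<pi>)"
proof -
  have "linear (tensor_op (\<pi> (spin_gen i j)) (pi_Ad (spin_gen i j)))" for i j
    by (rule linear_tensor_op[OF unitary_spin_rep_linear[OF spin_gen_in_spin_alg]])
  then show ?thesis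
    unfolding C_hat_def spin_gen_def[symmetric] by (intro linear_compose_scale_right linear_compose_sum ballI)
qed

lemma C_hat_tens:
  "C_hat \<pi> (tens \<phi> u) = - (1/4) *\<^sub>R (\<Sum>j\<in>UNIV. tens (\<pi> (cl_comm (cl_vec (axis j 1)) (cl_vec u)) \<phi>) (axis j 1))"
proof -
  let ?t = "\<lambda>i j. tens (\<pi> (spin_gen i j) \<phi>)"
  let ?T = "\<Sum>i\<in>UNIV. \<Sum>j\<in>UNIV. u $ i *\<^sub>R ?t i j (axis j 1)"
  let ?S = "\<Sum>j\<in>UNIV. tens (\<pi> (cl_comm (cl_vec (axis j 1)) (cl_vec u)) \<phi>) (axis j 1)"
  have lin: "linear (\<pi> (spin_gen i j))" for i j
    by (rule unitary_spin_rep_linear[OF spin_gen_in_spin_alg])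
  have "C_hat \<pi> (tens \<phi> u) = (1/32) *\<^sub>R (\<Sum>i\<in>UNIV. \<Sum>j\<in>UNIV. ?t i j (pi_Ad (spin_gen i j) u))"
    unfolding C_hat_def spin_gen_def[symmetric] by (simp add: tensor_op_tens[OF lin linear_pi_Ad])
  also have "\<dots> = (1/8) *\<^sub>R (?T - (\<Sum>i\<in>UNIV. \<Sum>j\<in>UNIV. u $ j *\<^sub>R ?t i j (axis i 1)))"
    by (simp add: pi_Ad_spin_gen linear_diff[OF linear_tens_right] linear_scale[OF linear_tens_right]
        sum_subtractf scaleR_sum_right scaleR_diff_right)
  also have "(\<Sum>i\<in>UNIV. \<Sum>j\<in>UNIV. u $ j *\<^sub>R ?t i j (axis i 1)) = - ?T"
    by (subst sum.swap, subst unitary_spin_rep_antisym) (simp add: linear_neg[OF linear_tens_left] sum_negf)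
  also have "?T = - ?S"
    by (subst sum.swap) (simp add: unitary_spin_rep_cl_comm_axis linear_sum[OF linear_tens_left]
        linear_scale[OF linear_tens_left] linear_neg[OF linear_tens_left] sum_negf)
  also have "(1/8) *\<^sub>R (- ?S - - (- ?S)) = - (1/4) *\<^sub>R ?S"
    by (simp add: algebra_simps flip: scaleR_2)
  finally show ?thesis .
qed

end

section \<open>Orthonormal bases and orthogonal projections\<close>

lemma orthonormal_expansion_axis:
  fixes b :: "'n::finite \<Rightarrow> real ^ 'n"
  assumes "\<forall>i j. inner (b i) (b j) = (if i = j then 1 else 0)"
  shows "(\<Sum>i\<in>UNIV. b i $ q *\<^sub>R b i) = axis q 1"
proof -
  define M :: "real ^ 'n ^ 'n" where "M = (\<chi> i. b i)"
  have "M ** transpose M = mat 1"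
    using assms unfolding M_def by (simp add: vec_eq_iff matrix_matrix_mult_def transpose_def mat_def inner_vec_def)
  then have "transpose M ** M = mat 1"
    using matrix_left_right_inverse by blast
  then have "(\<Sum>i\<in>UNIV. b i $ q * b i $ k) = (if q = k then 1 else 0)" for k
    unfolding M_def by (simp add: vec_eq_iff matrix_matrix_mult_def transpose_def mat_def mult.commute)
  then show ?thesis
    by (simp add: vec_eq_iff sum_component axis_def)
qed

lemma sum_tens_orthonormal_basis:
  fixes b :: "'n::finite \<Rightarrow> real ^ 'n" and f :: "real ^ 'n \<Rightarrow> 'v::real_vector"
  assumes "linear f" and "\<forall>i j. inner (b i) (b j) = (if i = j then 1 else 0)"
  shows "(\<Sum>i\<in>UNIV. tens (f (b i)) (b i)) = (\<Sum>j\<in>UNIV. tens (f (axis j 1)) (axis j 1))"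
proof -
  have tens_sum: "(\<Sum>i\<in>UNIV. tens (f (c i)) (c i)) = (\<chi> q. f (axis q 1))"
    if "\<forall>i j. inner (c i) (c j) = (if i = j then 1 else 0)" for c :: "'n \<Rightarrow> real ^ 'n"
  proof -
    have "(\<Sum>i\<in>UNIV. c i $ q *\<^sub>R f (c i)) = f (\<Sum>i\<in>UNIV. c i $ q *\<^sub>R c i)" for q
      by (simp add: linear_sum[OF assms(1)] linear_scale[OF assms(1)])
    then have "(\<Sum>i\<in>UNIV. c i $ q *\<^sub>R f (c i)) = f (axis q 1)" for q
      unfolding orthonormal_expansion_axis[OF that] .
    then show ?thesis
      by (simp add: vec_eq_iff sum_component tens_def)
  qed
  show ?thesis
    using tens_sum[OF assms(2)] tens_sum[of "\<lambda>j. axis j 1"] by (simp add: inner_axis_axis)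
qed

lemma orth_proj_eqI:
  assumes "subspace W" "y \<in> W" "\<forall>w\<in>W. inner (x - y) w = 0"
  shows "orth_proj W x = y"
  unfolding orth_proj_def
proof (rule the_equality)
  show "y \<in> W \<and> (\<forall>w\<in>W. inner (x - y) w = 0)"
    using assms by simp
  fix y' assume y': "y' \<in> W \<and> (\<forall>w\<in>W. inner (x - y') w = 0)"
  then have "y - y' \<in> W"
    using assms(1,2) by (simp add: subspace_diff)
  then have "inner (y - y') (y - y') = inner (x - y') (y - y') - inner (x - y) (y - y')"
    by (simp add: inner_diff_left)
  also have "\<dots> = 0"
    using y' assms(3) \<open>y - y' \<in> W\<close> by simp
  finally show "y' = y"
    by simp
qed

lemma orth_proj_in_orthogonal:
  fixes W :: "'a::euclidean_space set"
  assumes "subspace W"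
  shows "orth_proj W x \<in> W \<and> (\<forall>w\<in>W. inner (x - orth_proj W x) w = 0)"
proof -
  obtain y z where "y \<in> span W" "\<And>w. w \<in> span W \<Longrightarrow> orthogonal z w" "x = y + z"
    using orthogonal_subspace_decomp_exists[of W x] by metis
  moreover have "span W = W"
    using assms by (rule span_eq_iff[THEN iffD2])
  ultimately have "y \<in> W" "\<forall>w\<in>W. inner (x - y) w = 0"
    by (auto simp: orthogonal_def)
  then show ?thesis
    using orth_proj_eqI[OF assms] by simp
qed

lemma linear_orth_proj:
  fixes W :: "'a::euclidean_space set"
  assumes "subspace W"
  shows "linear (orth_proj W)"
proof (rule linearI)
  note P = orth_proj_in_orthogonal[OF assms]
  fix x y :: 'a and c :: real
  show "orth_proj W (x + y) = orth_proj W x + orth_proj W y"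
    using P[of x] P[of y] assms
    by (intro orth_proj_eqI) (auto simp: subspace_add inner_diff_left inner_add_left algebra_simps)
  show "orth_proj W (c *\<^sub>R x) = c *\<^sub>R orth_proj W x"
    using P[of x] assms
    by (intro orth_proj_eqI) (auto simp: subspace_scale inner_diff_left algebra_simps)
qed

lemma orth_proj_diagonal_operator:
  fixes W :: "nat \<Rightarrow> 'a::euclidean_space set" and A :: "'a \<Rightarrow> 'a"
  assumes sub: "\<And>l. l \<le> N \<Longrightarrow> subspace (W l)"
    and orth: "\<And>k l X Y. k \<le> N \<Longrightarrow> l \<le> N \<Longrightarrow> k \<noteq> l \<Longrightarrow> X \<in> W k \<Longrightarrow> Y \<in> W l \<Longrightarrow> inner X Y = 0"
    and decomp: "\<And>X. \<exists>Z. (\<forall>l\<le>N. Z l \<in> W l) \<and> X = (\<Sum>l\<le>N. Z l)"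
    and "linear A"
    and eigen: "\<And>l X. l \<le> N \<Longrightarrow> X \<in> W l \<Longrightarrow> A X = m l *\<^sub>R X"
    and "k \<le> N"
  shows "orth_proj (W k) (A X) = m k *\<^sub>R orth_proj (W k) X"
proof -
  obtain Z where Z: "\<forall>l\<le>N. Z l \<in> W l" and X: "X = (\<Sum>l\<le>N. Z l)"
    using decomp by blast
  have P: "linear (orth_proj (W k))"
    using linear_orth_proj[OF sub[OF \<open>k \<le> N\<close>]] .
  have PZ: "orth_proj (W k) (Z l) = (if l = k then Z k else 0)" if "l \<le> N" for l
  proof (cases "l = k")
    case True
    then show ?thesis
      using Z \<open>k \<le> N\<close> by (simp add: orth_proj_eqI sub)
  next
    case False
    have "\<forall>w\<in>W k. inner (Z l - 0) w = 0"
      using orth[OF that \<open>k \<le> N\<close> False] Z that by simp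
    then show ?thesis
      using False sub[OF \<open>k \<le> N\<close>] by (simp add: orth_proj_eqI subspace_0)
  qed
  have "A X = (\<Sum>l\<le>N. m l *\<^sub>R Z l)"
    unfolding X linear_sum[OF \<open>linear A\<close>] using Z eigen by simp
  then have "orth_proj (W k) (A X) = m k *\<^sub>R Z k"
    using PZ \<open>k \<le> N\<close>
    by (simp add: linear_sum[OF P] linear_scale[OF P] if_distrib[of "\<lambda>v. _ *\<^sub>R v"] cong: if_cong)
  moreover have "orth_proj (W k) X = Z k"
    unfolding X using PZ \<open>k \<le> N\<close> by (simp add: linear_sum[OF P])
  ultimately show ?thesis
    by simp
qed

theorem lemma3p4:
  fixes \<pi> :: "('n::{finite,linorder}) cl \<Rightarrow> 'v \<Rightarrow> ('v::euclidean_space)"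
    and J :: "'v \<Rightarrow> 'v"
    and N :: nat
    and W :: "nat \<Rightarrow> ('v ^ ('n::{finite,linorder})) set"
    and m :: "nat \<Rightarrow> real"
  assumes rep: "unitary_spin_rep \<pi> J UNIV"
    and irr: "irreducible_rep \<pi> J UNIV"
    and sub: "\<And>k. k \<le> N \<Longrightarrow> subspace (W k)"
    and inv: "\<And>k a X. k \<le> N \<Longrightarrow> a \<in> spin_alg \<Longrightarrow> X \<in> W k \<Longrightarrow> tens_act \<pi> a X \<in> W k"
    and Jinv: "\<And>k X. k \<le> N \<Longrightarrow> X \<in> W k \<Longrightarrow> tens_J J X \<in> W k"
    and irrW: "\<And>k. k \<le> N \<Longrightarrow> irreducible_rep (tens_act \<pi>) (tens_J J) (W k)"
    and orth: "\<And>k l X Y. k \<le> N \<Longrightarrow> l \<le> N \<Longrightarrow> k \<noteq> l \<Longrightarrow> X \<in> W k \<Longrightarrow> Y \<in> W l \<Longrightarrow> inner X Y = 0"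
    and decomp: "\<And>X. \<exists>Z. (\<forall>k\<le>N. Z k \<in> W k) \<and> X = (\<Sum>k\<le>N. Z k)"
    and weight: "\<And>k X. k \<le> N \<Longrightarrow> X \<in> W k \<Longrightarrow> C_hat \<pi> X = m k *\<^sub>R X"
  shows "\<forall>k\<le>N. \<forall>u :: real ^ ('n::{finite,linorder}). \<forall>b :: ('n::{finite,linorder}) \<Rightarrow> real ^ ('n::{finite,linorder}).
           (\<forall>i j. inner (b i) (b j) = (if i = j then 1 else 0)) \<longrightarrow>
           (\<forall>\<phi>. - (1/4) *\<^sub>R (\<Sum>i\<in>UNIV. clifford_hom (W k) (b i) (\<pi> (cl_comm (cl_vec (b i)) (cl_vec u)) \<phi>))
                 = m k *\<^sub>R clifford_hom (W k) u \<phi>)"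
proof (intro allI impI)
  fix k :: nat and u :: "real ^ ('n::{finite,linorder})"
    and b :: "('n::{finite,linorder}) \<Rightarrow> real ^ ('n::{finite,linorder})" and \<phi> :: 'v
  assume k: "k \<le> N" and onb: "\<forall>i j. inner (b i) (b j) = (if i = j then 1 else (0::real))"
  let ?P = "orth_proj (W k)"
  let ?f = "\<lambda>x. \<pi> (cl_comm (cl_vec x) (cl_vec u)) \<phi>"
  have P: "linear ?P"
    using linear_orth_proj[OF sub[OF k]] .
  have "- (1/4) *\<^sub>R (\<Sum>i\<in>UNIV. clifford_hom (W k) (b i) (?f (b i)))
      = ?P (- (1/4) *\<^sub>R (\<Sum>i\<in>UNIV. tens (?f (b i)) (b i)))"
    unfolding clifford_hom_def linear_scale[OF P] linear_sum[OF P] ..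
  also have "\<dots> = ?P (C_hat \<pi> (tens \<phi> u))"
    using sum_tens_orthonormal_basis[OF linear_unitary_spin_rep_cl_comm[OF rep] onb] C_hat_tens[OF rep]
    by simp
  also have "\<dots> = m k *\<^sub>R ?P (tens \<phi> u)"
    using orth_proj_diagonal_operator[OF sub orth decomp linear_C_hat[OF rep] weight k] .
  finally show "- (1/4) *\<^sub>R (\<Sum>i\<in>UNIV. clifford_hom (W k) (b i) (?f (b i)))
      = m k *\<^sub>R clifford_hom (W k) u \<phi>"
    unfolding clifford_hom_def .
qed

end
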